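(* Let $G$ be a $K_4$-free graph whose diamonds are mutually edge-disjoint. Then $\theta_e(G)=|E(G)|-2t(G)+d(G)$.
   Context: All graphs are finite and simple. A diamond is a subgraph isomorphic to $K_4$ minus one edge. $t(G)$ is the number of triangles of $G$ and $d(G)$ the number of diamonds of $G$. An edge clique cover of $G$ is a collection of cliques of $G$ such that every edge has both endpoints in some clique of the collection; $\theta_e(G)$ is the minimum size of an edge clique cover of $G$. *)

theory Defs
  imports Main
begin

definition simple_graph :: "'a set \<Rightarrow> 'a set set \<Rightarrow> bool" where
  "simple_graph V E \<longleftrightarrow> finite V \<and>
     (\<forall>e\<in>E. \<exists>u v. u \<noteq> v \<and> u \<in> V \<and> v \<in> V \<and> e = {u, v})"

definition clique :: "'a set \<Rightarrow> 'a set set \<Rightarrow> 'a set \<Rightarrow> bool" where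
  "clique V E K \<longleftrightarrow> K \<subseteq> V \<and> (\<forall>u\<in>K. \<forall>v\<in>K. u \<noteq> v \<longrightarrow> {u, v} \<in> E)"

definition K4_free :: "'a set \<Rightarrow> 'a set set \<Rightarrow> bool" where
  "K4_free V E \<longleftrightarrow> \<not> (\<exists>K. clique V E K \<and> card K = 4)"

definition triangles :: "'a set \<Rightarrow> 'a set set \<Rightarrow> 'a set set" where
  "triangles V E = {T. clique V E T \<and> card T = 3}"

definition num_triangles :: "'a set \<Rightarrow> 'a set set \<Rightarrow> nat" where
  "num_triangles V E = card (triangles V E)"

text \<open>Diamonds: subgraphs isomorphic to K4 minus an edge. Such a subgraph has no isolated
  vertices, hence is determined by its edge set: a set of 5 edges of G spanning exactly
  4 vertices (any 5 edges on 4 vertices form K4 minus one edge).\<close>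
definition diamonds :: "'a set \<Rightarrow> 'a set set \<Rightarrow> 'a set set set" where
  "diamonds V E = {D. D \<subseteq> E \<and> card D = 5 \<and> card (\<Union>D) = 4}"

definition num_diamonds :: "'a set \<Rightarrow> 'a set set \<Rightarrow> nat" where
  "num_diamonds V E = card (diamonds V E)"

definition diamonds_edge_disjoint :: "'a set \<Rightarrow> 'a set set \<Rightarrow> bool" where
  "diamonds_edge_disjoint V E \<longleftrightarrow>
     (\<forall>D1\<in>diamonds V E. \<forall>D2\<in>diamonds V E. D1 \<noteq> D2 \<longrightarrow> D1 \<inter> D2 = {})"

definition edge_clique_cover :: "'a set \<Rightarrow> 'a set set \<Rightarrow> 'a set set \<Rightarrow> bool" where
  "edge_clique_cover V E C \<longleftrightarrow> (\<forall>K\<in>C. clique V E K) \<and> (\<forall>e\<in>E. \<exists>K\<in>C. e \<subseteq> K)"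

definition theta_e :: "'a set \<Rightarrow> 'a set set \<Rightarrow> nat" where
  "theta_e V E = (LEAST k. \<exists>C. finite C \<and> card C = k \<and> edge_clique_cover V E C)"

end

theory Submission
  imports Defs
begin

text \<open>In a \<open>K\<^sub>4\<close>-free graph every clique with an edge is that edge or a triangle. If the
  diamonds are edge-disjoint, every edge lies in at most two triangles and every triangle has a
  private edge, lying in no other triangle. A cover must spend a separate clique on each private
  edge and on each edge in no triangle, while the triangles together with the edges in no
  triangle form a cover; so \<open>\<theta>\<^sub>e = t + |E\<^sub>0|\<close>, where \<open>E\<^sub>0\<close> is the set of
  edges in no triangle. Counting edge-triangle incidences gives \<open>3t = |E| - |E\<^sub>0| + |E\<^sub>2|\<close>,
  where \<open>E\<^sub>2\<close> is the set of edges in two triangles, and each such edge is the spine of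
  exactly one diamond, the union of its two triangles; hence \<open>|E\<^sub>2| = d\<close>.\<close>

lemma clique_subset: "clique V E K \<Longrightarrow> L \<subseteq> K \<Longrightarrow> clique V E L"
  unfolding clique_def by blast

definition diamond_edges :: "'a \<Rightarrow> 'a \<Rightarrow> 'a \<Rightarrow> 'a \<Rightarrow> 'a set set" where
  "diamond_edges a b c x = {{a,b},{a,c},{b,c},{a,x},{b,x}}"

lemma diamond_edges_eq_imp_spine_eq:
  assumes "diamond_edges a b c x = diamond_edges a' b' c' x'"
    and "distinct [a,b,c,x]" and "distinct [a',b',c',x']"
  shows "{a,b} = {a',b'}"
proof -
  have W: "{a',b',c',x'} = {a,b,c,x}"
    using arg_cong[OF assms(1), of Union] by (simp add: diamond_edges_def insert_commute)
  have "{c',x'} \<notin> diamond_edges a' b' c' x'"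
    using assms(3) by (auto simp: diamond_edges_def doubleton_eq_iff)
  then have "{c',x'} \<notin> diamond_edges a b c x" using assms(1) by simp
  moreover have "c' \<in> {a,b,c,x}" "x' \<in> {a,b,c,x}" "c' \<noteq> x'" using W assms(3) by auto
  ultimately have "{c',x'} = {c,x}"
    unfolding diamond_edges_def by (elim insertE emptyE) (simp_all add: insert_commute)
  then show ?thesis
    using W assms(2,3) by (auto simp: doubleton_eq_iff)
qed

lemma two_subsets_eq_insert_diamond_edges:
  assumes "distinct [a,b,c,x]"
  shows "{e. e \<subseteq> {a,b,c,x} \<and> card e = 2} = insert {c,x} (diamond_edges a b c x)"
proof (intro equalityI subsetI)
  fix e assume "e \<in> {e. e \<subseteq> {a,b,c,x} \<and> card e = 2}"
  then obtain u v where "e = {u,v}" "u \<noteq> v" "u \<in> {a,b,c,x}" "v \<in> {a,b,c,x}"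
    by (auto simp: card_2_iff)
  then show "e \<in> insert {c,x} (diamond_edges a b c x)"
    unfolding diamond_edges_def by (elim insertE emptyE) (simp_all add: insert_commute)
qed (use assms in \<open>auto simp: diamond_edges_def\<close>)

locale simple_graph_on =
  fixes V :: "'a set" and E :: "'a set set"
  assumes simple: "simple_graph V E"
begin

lemma finite_V: "finite V"
  using simple by (simp add: simple_graph_def)

lemma edgeE:
  assumes "e \<in> E"
  obtains u v where "u \<noteq> v" "u \<in> V" "v \<in> V" "e = {u,v}"
  using assms simple by (auto simp: simple_graph_def)

lemma edges_subset_Pow: "E \<subseteq> Pow V"
  by (auto elim: edgeE)

lemma finite_E: "finite E"
  using edges_subset_Pow finite_V by (simp add: finite_subset)

lemma card_edge: "e \<in> E \<Longrightarrow> card e = 2"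
  by (auto elim: edgeE)

lemma edge_distinct: "{u,v} \<in> E \<Longrightarrow> u \<noteq> v"
  using card_edge by fastforce

lemma edge_vertices: "{u,v} \<in> E \<Longrightarrow> u \<in> V \<and> v \<in> V"
  using edges_subset_Pow by blast

lemma edge_clique:
  assumes "e \<in> E" shows "clique V E e"
proof -
  obtain u v where "u \<in> V" "v \<in> V" "e = {u,v}" using assms by (rule edgeE)
  with assms show ?thesis by (auto simp: clique_def insert_commute)
qed

lemma triangleI:
  assumes "{a,b} \<in> E" "{a,c} \<in> E" "{b,c} \<in> E"
  shows "{a,b,c} \<in> triangles V E"
proof -
  have "a \<noteq> b" "a \<noteq> c" "b \<noteq> c" using assms by (auto dest: edge_distinct)
  moreover have "clique V E {a,b,c}"
    unfolding clique_def using assms by (auto simp: insert_commute dest: edge_vertices)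
  ultimately show ?thesis by (simp add: triangles_def)
qed

lemma triangleE:
  assumes "T \<in> triangles V E"
  obtains a b c where "T = {a,b,c}" "{a,b} \<in> E" "{a,c} \<in> E" "{b,c} \<in> E"
proof -
  obtain a b c where T: "T = {a,b,c}" "a \<noteq> b" "b \<noteq> c" "a \<noteq> c"
    and "clique V E T"
    using assms by (auto simp: triangles_def card_3_iff)
  then have "{a,b} \<in> E" "{a,c} \<in> E" "{b,c} \<in> E" unfolding clique_def by auto
  with T(1) show thesis by (rule that)
qed

lemma finite_triangles: "finite (triangles V E)"
proof (rule finite_subset)
  show "triangles V E \<subseteq> Pow V" by (auto simp: triangles_def clique_def)
qed (simp add: finite_V)

lemma card_triangle_edges:
  assumes "T \<in> triangles V E"
  shows "card {e \<in> E. e \<subseteq> T} = 3"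
proof -
  obtain a b c where T: "T = {a,b,c}" and abc: "{a,b} \<in> E" "{a,c} \<in> E" "{b,c} \<in> E"
    using assms by (rule triangleE)
  then have "a \<noteq> b" "a \<noteq> c" "b \<noteq> c" by (auto dest: edge_distinct)
  have "{e \<in> E. e \<subseteq> T} = {{a,b},{a,c},{b,c}}"
  proof
    show "{e \<in> E. e \<subseteq> T} \<subseteq> {{a,b},{a,c},{b,c}}"
    proof
      fix e assume e: "e \<in> {e \<in> E. e \<subseteq> T}"
      then obtain u v where "u \<noteq> v" "e = {u,v}" by (auto elim: edgeE)
      moreover have "u \<in> {a,b,c}" "v \<in> {a,b,c}" using e T \<open>e = {u,v}\<close> by auto
      ultimately show "e \<in> {{a,b},{a,c},{b,c}}"
        by (elim insertE emptyE) (simp_all add: insert_commute)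
    qed
  next
    show "{{a,b},{a,c},{b,c}} \<subseteq> {e \<in> E. e \<subseteq> T}" using abc T by simp
  qed
  with \<open>a \<noteq> b\<close> \<open>a \<noteq> c\<close> \<open>b \<noteq> c\<close> show ?thesis by (simp add: doubleton_eq_iff)
qed

definition common_nbrs :: "'a set \<Rightarrow> 'a set" where
  "common_nbrs e = {z. z \<notin> e \<and> (\<forall>u\<in>e. {u,z} \<in> E)}"

definition triangles_through :: "'a set \<Rightarrow> 'a set set" where
  "triangles_through e = {T \<in> triangles V E. e \<subseteq> T}"

lemma common_nbrs_edge:
  "{a,b} \<in> E \<Longrightarrow> z \<in> common_nbrs {a,b} \<longleftrightarrow> {a,z} \<in> E \<and> {b,z} \<in> E"
  unfolding common_nbrs_def by (auto dest: edge_distinct)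

lemma finite_common_nbrs:
  assumes "e \<in> E" shows "finite (common_nbrs e)"
proof -
  obtain a b where "e = {a,b}" using assms by (auto elim: edgeE)
  then have "common_nbrs e \<subseteq> V" by (auto simp: common_nbrs_def dest: edge_vertices)
  then show ?thesis using finite_V finite_subset by blast
qed

lemma triangles_through_eq:
  assumes "e \<in> E"
  shows "triangles_through e = (\<lambda>z. insert z e) ` common_nbrs e"
proof (intro equalityI subsetI)
  fix T assume "T \<in> triangles_through e"
  then have T: "clique V E T" "card T = 3" "e \<subseteq> T"
    by (auto simp: triangles_through_def triangles_def)
  moreover have "finite T" using T(2) card.infinite by fastforce
  ultimately have "card (T - e) = 1"
    using card_edge[OF assms] by (simp add: card_Diff_subset finite_subset)
  then obtain z where z: "T - e = {z}" by (auto simp: card_Suc_eq)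
  then have "T = insert z e" using T(3) by auto
  moreover have "z \<in> common_nbrs e"
  proof -
    have "z \<in> T" "z \<notin> e" using z by auto
    with T(1,3) have "{u,z} \<in> E" if "u \<in> e" for u
      using that unfolding clique_def by (metis subsetD)
    with \<open>z \<notin> e\<close> show ?thesis unfolding common_nbrs_def by blast
  qed
  ultimately show "T \<in> (\<lambda>z. insert z e) ` common_nbrs e" by blast
next
  fix T assume "T \<in> (\<lambda>z. insert z e) ` common_nbrs e"
  then obtain z where z: "z \<in> common_nbrs e" and T: "T = insert z e" by blast
  obtain a b where e: "e = {a,b}" using assms by (auto elim: edgeE)
  with assms z have "{a,b} \<in> E" "{a,z} \<in> E" "{b,z} \<in> E"
    by (auto simp: common_nbrs_edge)
  then have "{a,b,z} \<in> triangles V E" by (rule triangleI)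
  then show "T \<in> triangles_through e"
    unfolding triangles_through_def T e by (simp add: insert_commute)
qed

lemma card_triangles_through:
  assumes "e \<in> E"
  shows "card (triangles_through e) = card (common_nbrs e)"
proof -
  have "inj_on (\<lambda>z. insert z e) (common_nbrs e)"
    by (rule inj_onI) (auto simp: common_nbrs_def)
  then show ?thesis using triangles_through_eq[OF assms] by (simp add: card_image)
qed

lemma sum_card_triangles_through:
  "(\<Sum>e\<in>E. card (triangles_through e)) = 3 * card (triangles V E)"
  unfolding triangles_through_def
  by (rule sum_multicount[OF finite_E finite_triangles]) (simp add: card_triangle_edges)

definition non_triangle_edges :: "'a set set" where
  "non_triangle_edges = {e \<in> E. triangles_through e = {}}"

definition shared_edges :: "'a set set" where
  "shared_edges = {e \<in> E. card (triangles_through e) = 2}"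

definition diamond_at :: "'a set \<Rightarrow> 'a set set" where
  "diamond_at e = {f \<in> E. f \<subseteq> \<Union>(triangles_through e)}"

lemma finite_non_triangle_edges: "finite non_triangle_edges"
  using finite_E by (simp add: non_triangle_edges_def)

lemma edge_clique_cover_triangles_non_triangle_edges:
  "edge_clique_cover V E (triangles V E \<union> non_triangle_edges)"
  unfolding edge_clique_cover_def
proof (intro conjI ballI)
  fix K assume "K \<in> triangles V E \<union> non_triangle_edges"
  then show "clique V E K"
    by (auto simp: triangles_def non_triangle_edges_def intro: edge_clique)
next
  fix e assume "e \<in> E"
  then show "\<exists>K\<in>triangles V E \<union> non_triangle_edges. e \<subseteq> K"
    by (cases "triangles_through e = {}")
      (auto simp: non_triangle_edges_def triangles_through_def)
qed

lemma card_triangles_Un_non_triangle_edges: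
  "card (triangles V E \<union> non_triangle_edges) = card (triangles V E) + card non_triangle_edges"
proof (rule card_Un_disjoint)
  show "finite non_triangle_edges" by (rule finite_non_triangle_edges)
  show "triangles V E \<inter> non_triangle_edges = {}"
    using card_edge by (fastforce simp: triangles_def non_triangle_edges_def)
qed (rule finite_triangles)

lemma diamond_edges_subset_distinct:
  assumes "diamond_edges a b c x \<subseteq> E" "c \<noteq> x"
  shows "distinct [a,b,c,x]"
  using assms by (auto simp: diamond_edges_def dest: edge_distinct)

lemma diamond_edges_in_diamonds:
  assumes "diamond_edges a b c x \<subseteq> E" "c \<noteq> x"
  shows "diamond_edges a b c x \<in> diamonds V E"
proof -
  have "distinct [a,b,c,x]" using assms by (rule diamond_edges_subset_distinct)
  then have "card (diamond_edges a b c x) = 5" "card (\<Union>(diamond_edges a b c x)) = 4"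
    by (auto simp: diamond_edges_def doubleton_eq_iff insert_commute)
  with assms(1) show ?thesis by (simp add: diamonds_def)
qed

lemma diamondE:
  assumes "D \<in> diamonds V E"
  obtains a b c x where "distinct [a,b,c,x]" "D = diamond_edges a b c x"
proof -
  define W where "W = \<Union>D"
  define P where "P = {f. f \<subseteq> W \<and> card f = 2}"
  have DE: "D \<subseteq> E" and card_D: "card D = 5" and card_W: "card W = 4"
    using assms by (auto simp: diamonds_def W_def)
  then have "finite W" by (metis card.infinite zero_neq_numeral)
  have "D \<subseteq> P" using DE card_edge by (auto simp: P_def W_def)
  moreover have "card P = 6"
    using n_subsets[OF \<open>finite W\<close>, of 2] card_W by (simp add: P_def numeral_eq_Suc)
  ultimately have "D \<noteq> P" using card_D by auto
  with \<open>D \<subseteq> P\<close> obtain m where m: "m \<in> P" "m \<notin> D" by blast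
  then obtain c x where cx: "m = {c,x}" "c \<noteq> x" "c \<in> W" "x \<in> W"
    by (auto simp: P_def card_2_iff)
  then have "card (W - {c,x}) = 2" using card_W \<open>finite W\<close> by (simp add: card_Diff_subset)
  then obtain a b where ab: "W - {c,x} = {a,b}" "a \<noteq> b" by (auto simp: card_2_iff)
  then have W: "W = {a,b,c,x}" using cx by auto
  have dist: "distinct [a,b,c,x]" using ab cx by auto
  have "P - {m} = diamond_edges a b c x"
    using two_subsets_eq_insert_diamond_edges[OF dist] dist cx(1)
    by (auto simp: P_def W diamond_edges_def doubleton_eq_iff)
  moreover have "D \<subseteq> P - {m}" using \<open>D \<subseteq> P\<close> m(2) by blast
  moreover have "card (diamond_edges a b c x) = 5"
    using dist by (auto simp: diamond_edges_def doubleton_eq_iff insert_commute)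
  ultimately have "D = diamond_edges a b c x"
    using card_D card_subset_eq[of "diamond_edges a b c x" D] by (simp add: diamond_edges_def)
  with dist show thesis by (rule that)
qed

end

locale K4_free_graph = simple_graph_on +
  assumes K4_free: "K4_free V E"
begin

lemma no_K4:
  assumes "{a,b} \<in> E" "{a,c} \<in> E" "{b,c} \<in> E" "{a,x} \<in> E" "{b,x} \<in> E" "{c,x} \<in> E"
  shows False
proof -
  have "a \<noteq> b" "a \<noteq> c" "b \<noteq> c" "a \<noteq> x" "b \<noteq> x" "c \<noteq> x"
    using assms by (auto dest: edge_distinct)
  then have "card {a,b,c,x} = 4" by simp
  moreover have "clique V E {a,b,c,x}"
    unfolding clique_def using assms by (auto simp: insert_commute dest: edge_vertices)
  ultimately show False using K4_free unfolding K4_free_def by blast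
qed

lemma clique_through_edge:
  assumes "clique V E K" "e \<in> E" "e \<subseteq> K"
  shows "K = e \<or> K \<in> triangles_through e"
proof (cases "K = e")
  case False
  with assms(3) obtain w where w: "w \<in> K" "w \<notin> e" by blast
  define T where "T = insert w e"
  have "T \<subseteq> K" using w assms(3) by (simp add: T_def)
  with assms(1) have "clique V E T" by (rule clique_subset)
  moreover have "card T = 3"
    using w card_edge[OF assms(2)] by (simp add: T_def card.insert_remove card_ge_0_finite)
  ultimately have T: "T \<in> triangles V E" by (simp add: triangles_def)
  have "K = T"
  proof (rule ccontr)
    assume "K \<noteq> T"
    with \<open>T \<subseteq> K\<close> obtain z where "z \<in> K" "z \<notin> T" by blast
    then have "clique V E (insert z T)" "card (insert z T) = 4"
      using clique_subset[OF assms(1)] \<open>T \<subseteq> K\<close> \<open>card T = 3\<close>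
      by (auto simp: card_insert_if card_ge_0_finite)
    then show False using K4_free unfolding K4_free_def by blast
  qed
  with T show ?thesis by (auto simp: triangles_through_def T_def)
qed simp

lemma diamond_at_eq:
  assumes "{a,b} \<in> E" "common_nbrs {a,b} = {c,x}" "c \<noteq> x"
  shows "diamond_at {a,b} = diamond_edges a b c x"
proof -
  have edges: "{a,c} \<in> E" "{b,c} \<in> E" "{a,x} \<in> E" "{b,x} \<in> E"
    using assms(1,2) common_nbrs_edge by blast+
  then have "{c,x} \<notin> E" using no_K4 assms(1) by blast
  have sub: "diamond_edges a b c x \<subseteq> E" using assms(1) edges by (simp add: diamond_edges_def)
  then have dist: "distinct [a,b,c,x]" using assms(3) by (rule diamond_edges_subset_distinct)
  have W: "\<Union>(triangles_through {a,b}) = {a,b,c,x}"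
    using triangles_through_eq[OF assms(1)] assms(2) by auto
  show ?thesis
  proof (intro equalityI subsetI)
    fix f assume "f \<in> diamond_at {a,b}"
    then have "f \<in> {f. f \<subseteq> {a,b,c,x} \<and> card f = 2}" "f \<noteq> {c,x}"
      using W card_edge \<open>{c,x} \<notin> E\<close> by (auto simp: diamond_at_def)
    then show "f \<in> diamond_edges a b c x"
      using two_subsets_eq_insert_diamond_edges[OF dist] by blast
  qed (use sub W in \<open>auto simp: diamond_at_def diamond_edges_def\<close>)
qed

lemma shared_edgeE:
  assumes "e \<in> shared_edges"
  obtains a b c x where "e = {a,b}" "c \<noteq> x" "diamond_edges a b c x \<subseteq> E"
    "diamond_at e = diamond_edges a b c x"
proof -
  have e: "e \<in> E" "card (common_nbrs e) = 2"
    using assms card_triangles_through by (auto simp: shared_edges_def)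
  obtain a b where ab: "e = {a,b}" using e(1) by (auto elim: edgeE)
  obtain c x where cx: "common_nbrs e = {c,x}" "c \<noteq> x" using e(2) by (auto simp: card_2_iff)
  then have "c \<in> common_nbrs {a,b}" "x \<in> common_nbrs {a,b}" using ab by auto
  then have "diamond_edges a b c x \<subseteq> E"
    using e(1) ab by (simp add: diamond_edges_def common_nbrs_edge)
  moreover have "diamond_at e = diamond_edges a b c x" using diamond_at_eq e(1) ab cx by simp
  ultimately show thesis by (rule that[OF ab cx(2)])
qed

end

locale diamond_disjoint_graph = K4_free_graph +
  assumes diamonds_disjoint: "diamonds_edge_disjoint V E"
begin

lemma diamonds_sharing_edge_eq:
  assumes "D1 \<in> diamonds V E" "D2 \<in> diamonds V E" "f \<in> D1" "f \<in> D2"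
  shows "D1 = D2"
  using assms diamonds_disjoint unfolding diamonds_edge_disjoint_def by blast

lemma no_three_common_nbrs:
  assumes "{a,b} \<in> E" "{a,c} \<in> E" "{b,c} \<in> E" "{a,x} \<in> E" "{b,x} \<in> E"
    "{a,y} \<in> E" "{b,y} \<in> E" "distinct [c,x,y]"
  shows False
proof -
  have "diamond_edges a b c x \<in> diamonds V E" "diamond_edges a b c y \<in> diamonds V E"
    using assms by (intro diamond_edges_in_diamonds; auto simp: diamond_edges_def)+
  then have "diamond_edges a b c x = diamond_edges a b c y"
    by (rule diamonds_sharing_edge_eq[where f = "{a,b}"]) (simp_all add: diamond_edges_def)
  moreover have "{a,x} \<notin> diamond_edges a b c y"
    using assms by (auto simp: diamond_edges_def doubleton_eq_iff dest: edge_distinct)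
  ultimately show False by (metis diamond_edges_def insertCI)
qed

lemma no_apexes_on_two_sides:
  assumes "{a,b} \<in> E" "{a,c} \<in> E" "{b,c} \<in> E" "{a,x} \<in> E" "{b,x} \<in> E" "x \<noteq> c"
    "{a,y} \<in> E" "{c,y} \<in> E" "y \<noteq> b"
  shows False
proof -
  have "x \<noteq> y" using no_K4[of a b c x] assms by (auto simp: insert_commute)
  have "diamond_edges a b c x \<in> diamonds V E" "diamond_edges a c b y \<in> diamonds V E"
    using assms by (intro diamond_edges_in_diamonds; auto simp: diamond_edges_def insert_commute)+
  then have "diamond_edges a b c x = diamond_edges a c b y"
    by (rule diamonds_sharing_edge_eq[where f = "{a,b}"])
      (simp_all add: diamond_edges_def insert_commute)
  moreover have "{b,x} \<notin> diamond_edges a c b y"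
    using assms \<open>x \<noteq> y\<close> by (auto simp: diamond_edges_def doubleton_eq_iff dest: edge_distinct)
  ultimately show False by (metis diamond_edges_def insertCI)
qed

lemma card_common_nbrs_le_2:
  assumes "e \<in> E"
  shows "card (common_nbrs e) \<le> 2"
proof (rule ccontr)
  assume "\<not> card (common_nbrs e) \<le> 2"
  then obtain S where "S \<subseteq> common_nbrs e" "card S = 3"
    using obtain_subset_with_card_n[of 3 "common_nbrs e"] by auto
  then obtain c x y where cxy: "distinct [c,x,y]" "{c,x,y} \<subseteq> common_nbrs e"
    by (auto simp: card_3_iff)
  obtain a b where e: "e = {a,b}" using assms by (auto elim: edgeE)
  with assms cxy(2) have "{a,c} \<in> E" "{b,c} \<in> E" "{a,x} \<in> E" "{b,x} \<in> E"
    "{a,y} \<in> E" "{b,y} \<in> E"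
    by (simp_all add: common_nbrs_edge)
  with assms e cxy(1) show False using no_three_common_nbrs[of a b c x y] by simp
qed

lemma triangle_has_private_edge:
  assumes "T \<in> triangles V E"
  shows "\<exists>e\<in>E. e \<subseteq> T \<and> triangles_through e = {T}"
proof -
  obtain a b c where T: "T = {a,b,c}" and abc: "{a,b} \<in> E" "{a,c} \<in> E" "{b,c} \<in> E"
    using assms by (rule triangleE)
  have sole_triangle: "triangles_through {u,v} = {T}"
    if "{u,v} \<in> E" "T = {u,v,w}" "common_nbrs {u,v} \<subseteq> {w}" "w \<in> common_nbrs {u,v}"
    for u v w
  proof -
    have "common_nbrs {u,v} = {w}" using that(3,4) by blast
    then show ?thesis using triangles_through_eq[OF that(1)] that(2) by (simp add: insert_commute)
  qed
  show ?thesis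
  proof (cases "common_nbrs {a,b} \<subseteq> {c}")
    case True
    then have "triangles_through {a,b} = {T}"
      using abc T by (intro sole_triangle[of a b c]) (auto simp: common_nbrs_edge)
    with abc T show ?thesis by (intro bexI[of _ "{a,b}"]) auto
  next
    case False
    then obtain x where "x \<in> common_nbrs {a,b}" "x \<noteq> c" by blast
    with abc(1) have x: "{a,x} \<in> E" "{b,x} \<in> E" "x \<noteq> c" by (simp_all add: common_nbrs_edge)
    show ?thesis
    proof (cases "common_nbrs {a,c} \<subseteq> {b}")
      case True
      then have "triangles_through {a,c} = {T}"
        using abc T by (intro sole_triangle[of a c b]) (auto simp: common_nbrs_edge insert_commute)
      with abc T show ?thesis by (intro bexI[of _ "{a,c}"]) auto
    next
      case False
      then obtain y where "y \<in> common_nbrs {a,c}" "y \<noteq> b" by blast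
      with abc(2) have "{a,y} \<in> E" "{c,y} \<in> E" "y \<noteq> b" by (simp_all add: common_nbrs_edge)
      with no_apexes_on_two_sides[OF abc x] show ?thesis by blast
    qed
  qed
qed

text \<open>A clique covering a private edge is that edge or its triangle, and a clique covering an
  edge in no triangle is the edge itself; so distinct such edges need distinct cliques.\<close>
lemma card_le_edge_clique_cover:
  assumes "finite C" "edge_clique_cover V E C"
  shows "card (triangles V E) + card non_triangle_edges \<le> card C"
proof -
  define p where "p T = (SOME e. e \<in> E \<and> e \<subseteq> T \<and> triangles_through e = {T})" for T
  have p: "p T \<in> E" "p T \<subseteq> T" "triangles_through (p T) = {T}" if "T \<in> triangles V E" for T
    using someI_ex[OF triangle_has_private_edge[OF that, unfolded Bex_def]]
    unfolding p_def by blast+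
  define R where "R = p ` triangles V E \<union> non_triangle_edges"
  have "inj_on p (triangles V E)"
    by (rule inj_onI) (metis p(3) singleton_inject)
  moreover have "p ` triangles V E \<inter> non_triangle_edges = {}"
    using p(3) by (auto simp: non_triangle_edges_def)
  ultimately have card_R: "card R = card (triangles V E) + card non_triangle_edges"
    unfolding R_def using finite_triangles finite_E
    by (simp add: card_Un_disjoint card_image non_triangle_edges_def)
  have R_E: "R \<subseteq> E" using p(1) by (auto simp: R_def non_triangle_edges_def)
  obtain K where K: "K e \<in> C" "e \<subseteq> K e" if "e \<in> E" for e
    using assms(2) unfolding edge_clique_cover_def by metis
  have K_clique: "clique V E (K e)" if "e \<in> E" for e
    using assms(2) K(1)[OF that] by (simp add: edge_clique_cover_def)
  have K_inverse: "(if K e \<in> triangles V E then p (K e) else K e) = e" if "e \<in> R" for e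
  proof -
    have e: "e \<in> E" using that R_E by blast
    consider "K e = e" | "K e \<in> triangles_through e"
      using clique_through_edge[OF K_clique[OF e] e K(2)[OF e]] by blast
    then show ?thesis
    proof cases
      case 1
      then have "K e \<notin> triangles V E" using card_edge[OF e] by (auto simp: triangles_def)
      with 1 show ?thesis by simp
    next
      case 2
      then have "e \<notin> non_triangle_edges" by (auto simp: non_triangle_edges_def)
      with that obtain T where T: "T \<in> triangles V E" "e = p T" by (auto simp: R_def)
      with 2 p(3) have "K e = T" by auto
      with T show ?thesis by simp
    qed
  qed
  have "inj_on K R"
    by (rule inj_on_inverseI[where g = "\<lambda>M. if M \<in> triangles V E then p M else M"])
      (rule K_inverse)
  moreover have "K ` R \<subseteq> C" using K(1) R_E by blast
  ultimately have "card R \<le> card C" using assms(1) by (rule card_inj_on_le)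
  with card_R show ?thesis by simp
qed

lemma theta_e_eq: "theta_e V E = card (triangles V E) + card non_triangle_edges"
  unfolding theta_e_def
proof (rule Least_equality)
  show "\<exists>C. finite C \<and> card C = card (triangles V E) + card non_triangle_edges
          \<and> edge_clique_cover V E C"
    using edge_clique_cover_triangles_non_triangle_edges card_triangles_Un_non_triangle_edges
      finite_triangles finite_non_triangle_edges by blast
qed (use card_le_edge_clique_cover in blast)

lemma card_E_add_card_shared_edges:
  "card E + card shared_edges = 3 * card (triangles V E) + card non_triangle_edges"
proof -
  have count: "card (triangles_through e)
      = (if e \<in> non_triangle_edges then 0 else 1) + (if e \<in> shared_edges then 1 else 0)"
    if "e \<in> E" for e
  proof -
    have "finite (triangles_through e)"
      using triangles_through_eq[OF that] finite_common_nbrs[OF that] by simp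
    then have "triangles_through e = {} \<longleftrightarrow> card (triangles_through e) = 0" by simp
    moreover have "card (triangles_through e) \<le> 2"
      using card_common_nbrs_le_2[OF that] card_triangles_through[OF that] by simp
    ultimately show ?thesis
      using that by (auto simp: non_triangle_edges_def shared_edges_def)
  qed
  have "3 * card (triangles V E) = (\<Sum>e\<in>E. card (triangles_through e))"
    by (rule sum_card_triangles_through[symmetric])
  also have "\<dots> = (\<Sum>e\<in>E. (if e \<in> non_triangle_edges then 0 else 1)
      + (if e \<in> shared_edges then 1 else 0))"
    by (rule sum.cong) (simp_all add: count)
  also have "\<dots> = card (E - non_triangle_edges) + card shared_edges"
    using finite_E by (simp add: sum.distrib sum.If_cases Diff_eq shared_edges_def Collect_conj_eq)
  finally show ?thesis
    using finite_E card_Diff_subset[of non_triangle_edges E] card_mono[of E non_triangle_edges]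
    by (auto simp: non_triangle_edges_def)
qed

lemma bij_betw_diamond_at: "bij_betw diamond_at shared_edges (diamonds V E)"
proof (rule bij_betw_imageI)
  show "inj_on diamond_at shared_edges"
  proof (rule inj_onI)
    fix e e' assume "e \<in> shared_edges" "e' \<in> shared_edges" "diamond_at e = diamond_at e'"
    moreover obtain a b c x where "e = {a,b}" "c \<noteq> x"
      "diamond_edges a b c x \<subseteq> E" "diamond_at e = diamond_edges a b c x"
      using \<open>e \<in> shared_edges\<close> by (rule shared_edgeE)
    moreover obtain a' b' c' x' where "e' = {a',b'}" "c' \<noteq> x'"
      "diamond_edges a' b' c' x' \<subseteq> E" "diamond_at e' = diamond_edges a' b' c' x'"
      using \<open>e' \<in> shared_edges\<close> by (rule shared_edgeE)
    ultimately show "e = e'"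
      using diamond_edges_eq_imp_spine_eq diamond_edges_subset_distinct by metis
  qed
next
  show "diamond_at ` shared_edges = diamonds V E"
  proof (intro equalityI subsetI)
    fix D assume "D \<in> diamond_at ` shared_edges"
    then obtain e where "e \<in> shared_edges" "D = diamond_at e" by blast
    then show "D \<in> diamonds V E"
      by (metis shared_edgeE diamond_edges_in_diamonds)
  next
    fix D assume D: "D \<in> diamonds V E"
    then obtain a b c x where dist: "distinct [a,b,c,x]" and D_eq: "D = diamond_edges a b c x"
      by (rule diamondE)
    have sub: "diamond_edges a b c x \<subseteq> E" using D D_eq by (simp add: diamonds_def)
    then have ab: "{a,b} \<in> E" by (simp add: diamond_edges_def)
    have "{c,x} \<subseteq> common_nbrs {a,b}"
      using ab sub by (auto simp: diamond_edges_def common_nbrs_edge)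
    moreover have "card {c,x} = 2" using dist by simp
    ultimately have N: "common_nbrs {a,b} = {c,x}"
      using card_common_nbrs_le_2[OF ab] finite_common_nbrs[OF ab]
      by (metis card_seteq)
    then have "{a,b} \<in> shared_edges"
      using ab dist card_triangles_through[OF ab] by (simp add: shared_edges_def)
    moreover have "diamond_at {a,b} = D"
      using diamond_at_eq[OF ab N] dist D_eq by simp
    ultimately show "D \<in> diamond_at ` shared_edges" by blast
  qed
qed

lemma card_shared_edges: "card shared_edges = num_diamonds V E"
  unfolding num_diamonds_def by (rule bij_betw_same_card[OF bij_betw_diamond_at])

end

theorem mainTheorem10:
  fixes V :: "'a set" and E :: "'a set set"
  assumes "simple_graph V E"
    and "K4_free V E"
    and "diamonds_edge_disjoint V E"
  shows "int (theta_e V E) = int (card E) - 2 * int (num_triangles V E) + int (num_diamonds V E)"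
proof -
  interpret diamond_disjoint_graph V E
    using assms by unfold_locales
  have "card E + num_diamonds V E = 3 * num_triangles V E + card non_triangle_edges"
    using card_E_add_card_shared_edges card_shared_edges by (simp add: num_triangles_def)
  then show ?thesis
    using theta_e_eq by (simp add: num_triangles_def)
qed

end
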